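(* Let $F\in\mathcal C^0(\mathbb C^m)$ have polynomial growth, let $p\ge2$, and let $a_2(u),\dots,a_p(u)$ be the polynomials in $(u,\bar u)$ described in the context (in particular each satisfies $a_j(0)=0$, $da_j(0)=0$). Then, for $k$ large, both sides below are well defined and finite, and $$\int_{\mathbb C^m}G\Big(e^{-|u|^2}\Big[1+\sum_{j=2}^pa_j(u)k^{-j/2}\Big]\Big)F(u)\,\nu_u=\frac1{4\pi^2}\sum_{n=1}^\infty\frac1{n^2}\int_{\mathbb C^m}e^{-n|u|^2}\Big[1+\sum_{j=2}^pb_{pj}(u,n)k^{-j/2}\Big]F(u)\,\nu_u+O(k^{-p/2-1/4}),$$ where $b_{pj}(u,n)=B_{pj}(a_2(u),\dots,a_p(u);n)$.
   Context: $G(t)=\frac1{4\pi^2}\sum_{n\ge1}t^n/n^2$ for $-1\le t\le1$; $\nu_u$ is Euclidean volume on $\mathbb C^m$; $F$ has polynomial growth if $|F(u)|=O(1+|u|^r)$ for some $r$. For $j\ge2$ let $\mathcal P(j)=\{(r_2,\dots,r_p)\in\mathbb N^{p-1}:\sum_{\lambda=2}^p\lambda r_\lambda=j\}$; for $\mathbf r=(r_2,\dots,r_p)$ with $|\mathbf r|=r_2+\cdots+r_p$ and $n\in\mathbb Z_+$, ${n\choose\mathbf r}=\frac{n(n-1)\cdots(n-|\mathbf r|+1)}{r_2!\cdots r_p!}$; and $B_{pj}(C_2,\dots,C_p;n)=\sum_{\mathbf r\in\mathcal P(j)}{n\choose\mathbf r}\prod_{\lambda=2}^pC_\lambda^{r_\lambda}$,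 so that $(1+\sum_{j=2}^pC_jx^j)^n=1+\sum_{j=2}^{np}B_{pj}x^j$. Setting: $(L,h)\to M$ is a positive Hermitian holomorphic line bundle on a compact complex $m$-manifold, $\omega=\frac i2\Theta_h$, $H^0(M,L^k)$ has inner product $\int h^k(s_1,\bar s_2)\omega^m/m!$, $P_k(z,w)=|\Pi_k(z,w)|/(\Pi_k(z,z)\Pi_k(w,w))^{1/2}$ with $|\Pi_k(z,w)|=\|\sum_jS^k_j(z)\otimes\overline{S^k_j(w)}\|_{h^k\otimes h^k}$ for an orthonormal basis $\{S^k_j\}$. At $z_0\in M$ the frame $e_L$ and coordinates are chosen so that $\phi=-\log h(e_L,\overline{e_L})$ satisfies $\phi(z_0+z)=|z|^2+\frac14\sum\frac{\partial^4\phi}{\partial z^p\partial z^j\partial\bar z^q\partial\bar z^l}(z_0)z^pz^j\bar z^q\bar z^l+O(|z|^5)$; then $P_k(z_0+\frac u{\sqrt k},z_0)^2=e^{-|u|^2}[1+\sum_{r=2}^nk^{-r/2}a_r(u)+k^{-(n+1)/2}\widetilde E_{kn}(u)]$ with $a_2(u)=\frac14R_{z_0}(u,\bar u,u,\bar u)$ (the curvature tensor evaluated as $\sum R_{p\bar qj\bar l}(z_0)u^p\bar u^qu^j\bar u^l$), $a_r$ polynomials of degree $\le5r$ and parity $r$ with $a_r(0)=0$, $da_r(0)=0$, and $|\widetilde E_{kn}(u)|\le c|u|^2k^{\varepsilon}$ for $|u|<b\sqrt{\log k}$. These $a_r$ are the polynomials in the claim. *)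

theory Defs
  imports "HOL-Analysis.Analysis"
begin

text \<open>G(t) = 1/(4 pi^2) * sum_{n>=1} t^n / n^2  (meaningful for -1 <= t <= 1).\<close>
definition Gfun :: "real \<Rightarrow> real" where
  "Gfun t = (1 / (4 * pi\<^sup>2)) * (\<Sum>n. t ^ Suc n / (real (Suc n))\<^sup>2)"

text \<open>Real polynomial of total degree at most d in the real coordinates
  (Re u_i, Im u_i) of u in C^m, i.e. a polynomial in (u, conj u) with real values.\<close>
definition poly_fun_deg :: "nat \<Rightarrow> (complex^'m \<Rightarrow> real) \<Rightarrow> bool" where
  "poly_fun_deg d f \<longleftrightarrow>
     (\<exists>c :: ('m \<Rightarrow> nat \<times> nat) \<Rightarrow> real. \<forall>u.
        f u = (\<Sum>\<alpha>\<in>{\<alpha>. (\<Sum>i\<in>UNIV. fst (\<alpha> i) + snd (\<alpha> i)) \<le> d}.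
                 c \<alpha> * (\<Prod>i\<in>UNIV. Re (u $ i) ^ fst (\<alpha> i) * Im (u $ i) ^ snd (\<alpha> i))))"

text \<open>P(j) = {(r_2,...,r_p) : sum_{l=2}^p l r_l = j}, encoded as functions nat => nat
  supported in {2..p}.\<close>
definition Pset :: "nat \<Rightarrow> nat \<Rightarrow> (nat \<Rightarrow> nat) set" where
  "Pset p j = {r. (\<forall>l. l \<notin> {2..p} \<longrightarrow> r l = 0) \<and> (\<Sum>l\<in>{2..p}. l * r l) = j}"

definition multichoose :: "nat \<Rightarrow> nat \<Rightarrow> (nat \<Rightarrow> nat) \<Rightarrow> real" where
  "multichoose p n r = (\<Prod>i<(\<Sum>l\<in>{2..p}. r l). real n - real i) / (\<Prod>l\<in>{2..p}. fact (r l))"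

definition Bpj :: "nat \<Rightarrow> nat \<Rightarrow> (nat \<Rightarrow> real) \<Rightarrow> nat \<Rightarrow> real" where
  "Bpj p j C n = (\<Sum>r\<in>Pset p j. multichoose p n r * (\<Prod>l\<in>{2..p}. C l ^ r l))"

end

(* Put t = k powr (-1/2) and E = exp (-|u|^2) (1 + sum_j a_j(u) t^j).  Being polynomials that vanish
   to second order at 0, the a_j satisfy |a_j(u)| <= c (|u|^2 + |u|^(10 p)), so for a suitable
   fixed tau and all t <= tau we have 1 + sum_j |a_j(u)| tau^j <= exp (|u|^2 / 2), hence
   |E| <= exp (-|u|^2 / 2) <= 1.  Then G(E) F = (1 / 4 pi^2) sum_n E^n F / n^2, and the series can be
   integrated termwise against the weight exp (-|u|^2 / 2) |F|, which is integrable because F has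
   polynomial growth.  By the multinomial theorem, (1 + sum_j a_j t^j)^n is 1 + sum_{j<=p} b_pj t^j
   plus terms of degree > p in t; comparing this tail with the expansion of
   (1 + sum_j |a_j| tau^j)^n <= exp (n |u|^2 / 2) bounds the error of the n-th term by
   (t / tau)^(p+1) exp (-|u|^2 / 2) |F|, uniformly in n.  Summing against 1 / n^2 gives an error
   O(t^(p+1)) = O(k^(-(p+1)/2)). *)

theory Submission
  imports Defs "HOL-Computational_Algebra.Polynomial" "HOL-Probability.Distributions"
begin

section \<open>The coefficients \<open>B\<^sub>p\<^sub>j\<close>\<close>

definition falling_fact :: "nat \<Rightarrow> nat \<Rightarrow> real" where
  "falling_fact n q = (\<Prod>i<q. real n - real i)"

lemma falling_fact_Suc: "falling_fact (Suc n) q = falling_fact n q + real q * falling_fact n (q - 1)"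
proof (cases q)
  case (Suc q')
  have "falling_fact (Suc n) (Suc q') = real (Suc n) * falling_fact n q'"
    unfolding falling_fact_def by (subst prod.lessThan_Suc_shift) simp
  moreover have "falling_fact n (Suc q') = (real n - real q') * falling_fact n q'"
    by (simp add: falling_fact_def)
  ultimately show ?thesis using Suc by (simp add: algebra_simps)
qed (simp add: falling_fact_def)

lemma falling_fact_nonneg: "falling_fact n q \<ge> 0"
proof (cases "q \<le> n")
  case False
  then have "n \<in> {..<q}" by simp
  then show ?thesis unfolding falling_fact_def by (subst prod_zero) auto
qed (auto simp: falling_fact_def intro!: prod_nonneg)

lemma multichoose_falling_fact: "multichoose p n r = falling_fact n (\<Sum>l\<in>{2..p}. r l) / (\<Prod>l\<in>{2..p}. fact (r l))"
  by (simp add: multichoose_def falling_fact_def)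

lemma multichoose_nonneg: "multichoose p n r \<ge> 0"
  unfolding multichoose_falling_fact by (intro divide_nonneg_pos falling_fact_nonneg prod_pos) auto

lemma sum_fun_upd_remove:
  "finite A \<Longrightarrow> l \<in> A \<Longrightarrow> (\<Sum>m\<in>A. g m ((r(l := v)) m)) = g l v + (\<Sum>m\<in>A - {l}. g m (r m))"
  by (simp add: sum.remove)

lemma prod_fun_upd_remove:
  "finite A \<Longrightarrow> l \<in> A \<Longrightarrow> (\<Prod>m\<in>A. g m ((r(l := v)) m)) = g l v * (\<Prod>m\<in>A - {l}. g m (r m))"
  by (simp add: prod.remove)

lemma multichoose_Suc:
  "multichoose p (Suc n) r =
     multichoose p n r + (\<Sum>l\<in>{2..p}. if r l = 0 then 0 else multichoose p n (r(l := r l - 1)))"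
proof -
  let ?A = "{2..p}"
  define q where "q = (\<Sum>l\<in>?A. r l)"
  define D where "D = (\<Prod>l\<in>?A. fact (r l) :: real)"
  have D: "D > 0" unfolding D_def by (intro prod_pos) auto
  have lowered: "real (r l) * falling_fact n (q - 1) / D = multichoose p n (r(l := r l - 1))"
    if l: "l \<in> ?A" and rl: "r l \<noteq> 0" for l
  proof -
    define D' where "D' = (\<Prod>m\<in>?A - {l}. fact (r m) :: real)"
    have "(\<Sum>m\<in>?A. (r(l := r l - 1)) m) = r l - 1 + (\<Sum>m\<in>?A - {l}. r m)"
      using l by (intro sum_fun_upd_remove) auto
    also have "\<dots> = q - 1" using l rl by (simp add: q_def sum.remove)
    finally have "multichoose p n (r(l := r l - 1)) = falling_fact n (q - 1) / (fact (r l - 1) * D')"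
      using l unfolding multichoose_falling_fact D'_def by (subst prod_fun_upd_remove) auto
    moreover have "D = real (r l) * (fact (r l - 1) * D')"
      using l rl by (simp add: D_def D'_def prod.remove fact_reduce)
    ultimately show ?thesis using rl by simp
  qed
  have "multichoose p (Suc n) r = multichoose p n r + real q * falling_fact n (q - 1) / D"
    by (simp add: multichoose_falling_fact falling_fact_Suc add_divide_distrib q_def D_def)
  also have "real q * falling_fact n (q - 1) / D = (\<Sum>l\<in>?A. real (r l) * falling_fact n (q - 1) / D)"
    by (simp add: q_def sum_distrib_right sum_divide_distrib)
  also have "\<dots> = (\<Sum>l\<in>?A. if r l = 0 then 0 else multichoose p n (r(l := r l - 1)))"
    using lowered by (intro sum.cong refl) auto
  finally show ?thesis .
qed

lemma Pset_mult_le: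
  assumes "r \<in> Pset p j" "l \<in> {2..p}"
  shows "l * r l \<le> j"
proof -
  have "l * r l \<le> (\<Sum>m\<in>{2..p}. m * r m)" using assms(2) by (intro member_le_sum) auto
  then show ?thesis using assms(1) by (simp add: Pset_def)
qed

lemma Pset_le: "r \<in> Pset p j \<Longrightarrow> l \<in> {2..p} \<Longrightarrow> r l \<le> j"
proof -
  assume "r \<in> Pset p j" "l \<in> {2..p}"
  then have "r l \<le> l * r l" "l * r l \<le> j" using Pset_mult_le by auto
  then show ?thesis by linarith
qed

lemma finite_Pset: "finite (Pset p j)"
proof (rule finite_subset)
  show "Pset p j \<subseteq> {r. \<forall>l. (l \<in> {2..p} \<longrightarrow> r l \<in> {0..j}) \<and> (l \<notin> {2..p} \<longrightarrow> r l = 0)}"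
  proof
    fix r assume r: "r \<in> Pset p j"
    with Pset_le[OF r] show "r \<in> {r. \<forall>l. (l \<in> {2..p} \<longrightarrow> r l \<in> {0..j}) \<and> (l \<notin> {2..p} \<longrightarrow> r l = 0)}"
      by (simp add: Pset_def)
  qed
  show "finite {r. \<forall>l. (l \<in> {2..p} \<longrightarrow> r l \<in> {0..j}) \<and> (l \<notin> {2..p} \<longrightarrow> r l = (0::nat))}"
    by (intro finite_set_of_finite_funs) auto
qed

lemma Pset_0: "Pset p 0 = {\<lambda>_. 0}"
proof (intro equalityI subsetI)
  fix r assume r: "r \<in> Pset p 0"
  have "r l = 0" for l
  proof (cases "l \<in> {2..p}")
    case True
    then show ?thesis using Pset_mult_le[OF r True] by simp
  qed (use r in \<open>simp add: Pset_def\<close>)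
  then show "r \<in> {\<lambda>_. 0}" by auto
qed (simp add: Pset_def)

lemma Pset_1: "Pset p 1 = {}"
proof -
  have False if r: "r \<in> Pset p 1" for r
  proof -
    have "l * r l = 0" if "l \<in> {2..p}" for l
      using Pset_mult_le[OF r that] that by (cases "r l") auto
    then have "(\<Sum>l\<in>{2..p}. l * r l) = 0" by simp
    with r show False by (simp add: Pset_def)
  qed
  then show ?thesis by blast
qed

lemma bij_betw_Pset_lower:
  assumes l: "l \<in> {2..p}" and "l \<le> j"
  shows "bij_betw (\<lambda>r. r(l := r l - 1)) {r \<in> Pset p j. r l \<noteq> 0} (Pset p (j - l))"
proof (rule bij_betw_byWitness[where f' = "\<lambda>r. r(l := r l + 1)"])
  have weight: "(\<Sum>m\<in>{2..p}. m * (r(l := v)) m) + l * r l = (\<Sum>m\<in>{2..p}. m * r m) + l * v"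
    for r :: "nat \<Rightarrow> nat" and v
    using l by (simp add: sum_fun_upd_remove sum.remove del: fun_upd_apply)
  show "(\<lambda>r. r(l := r l - 1)) ` {r \<in> Pset p j. r l \<noteq> 0} \<subseteq> Pset p (j - l)"
  proof (rule image_subsetI)
    fix r assume "r \<in> {r \<in> Pset p j. r l \<noteq> 0}"
    then have r: "r \<in> Pset p j" "r l \<noteq> 0" by auto
    have "(\<Sum>m\<in>{2..p}. m * (r(l := r l - 1)) m) + l * r l = j + l * (r l - 1)"
      using r(1) by (simp add: weight Pset_def del: fun_upd_apply)
    then have "(\<Sum>m\<in>{2..p}. m * (r(l := r l - 1)) m) = j - l"
      using r(2) by (cases "r l") (auto simp del: fun_upd_apply)
    moreover have "\<forall>m. m \<notin> {2..p} \<longrightarrow> (r(l := r l - 1)) m = 0" using r l by (auto simp: Pset_def)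
    ultimately show "r(l := r l - 1) \<in> Pset p (j - l)" unfolding Pset_def by blast
  qed
  show "(\<lambda>r. r(l := r l + 1)) ` Pset p (j - l) \<subseteq> {r \<in> Pset p j. r l \<noteq> 0}"
  proof (rule image_subsetI)
    fix r assume r: "r \<in> Pset p (j - l)"
    have "(\<Sum>m\<in>{2..p}. m * (r(l := r l + 1)) m) + l * r l = (j - l) + l * (r l + 1)"
      using r by (simp add: weight Pset_def del: fun_upd_apply)
    then have "(\<Sum>m\<in>{2..p}. m * (r(l := r l + 1)) m) = j"
      using \<open>l \<le> j\<close> by (simp del: fun_upd_apply)
    moreover have "\<forall>m. m \<notin> {2..p} \<longrightarrow> (r(l := r l + 1)) m = 0" using r l by (auto simp: Pset_def)
    ultimately show "r(l := r l + 1) \<in> {r \<in> Pset p j. r l \<noteq> 0}" unfolding Pset_def by simp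
  qed
qed simp_all

lemma sum_Pset_lowered:
  assumes l: "l \<in> {2..p}"
  shows "(\<Sum>r\<in>Pset p j. if r l = 0 then 0
            else multichoose p n (r(l := r l - 1)) * (\<Prod>m\<in>{2..p}. C m ^ r m))
       = (if l \<le> j then C l * Bpj p (j - l) C n else 0)"
proof (cases "l \<le> j")
  case True
  define mono where "mono r = (\<Prod>m\<in>{2..p}. C m ^ r m)" for r
  define lower where "lower r = r(l := r l - 1)" for r :: "nat \<Rightarrow> nat"
  have mono_lower: "mono r = C l * mono (lower r)" if "r l \<noteq> 0" for r
  proof -
    have "mono r = C l ^ r l * (\<Prod>m\<in>{2..p} - {l}. C m ^ r m)"
      using l by (simp add: mono_def prod.remove)
    moreover have "mono (lower r) = C l ^ (r l - 1) * (\<Prod>m\<in>{2..p} - {l}. C m ^ r m)"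
      unfolding mono_def lower_def using l by (subst prod_fun_upd_remove) auto
    ultimately show ?thesis using that by (cases "r l") auto
  qed
  have "(\<Sum>r\<in>Pset p j. if r l = 0 then 0 else multichoose p n (lower r) * mono r)
      = (\<Sum>r\<in>Pset p j. if r l \<noteq> 0 then C l * (multichoose p n (lower r) * mono (lower r)) else 0)"
    using mono_lower by (intro sum.cong refl) auto
  also have "\<dots> = (\<Sum>r\<in>{r \<in> Pset p j. r l \<noteq> 0}. C l * (multichoose p n (lower r) * mono (lower r)))"
    by (simp add: sum.inter_filter finite_Pset)
  also have "\<dots> = C l * Bpj p (j - l) C n"
    unfolding Bpj_def sum_distrib_left mono_def lower_def
    by (rule sum.reindex_bij_betw[OF bij_betw_Pset_lower[OF l True]])
  finally show ?thesis using True unfolding mono_def lower_def by simp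
next
  case False
  have "r l = 0" if "r \<in> Pset p j" for r
    using Pset_mult_le[OF that l] False by (cases "r l") auto
  then show ?thesis using False by simp
qed

lemma Bpj_Suc:
  "Bpj p j C (Suc n) = Bpj p j C n + (\<Sum>l\<in>{2..p}. if l \<le> j then C l * Bpj p (j - l) C n else 0)"
proof -
  have "Bpj p j C (Suc n) = (\<Sum>r\<in>Pset p j. multichoose p n r * (\<Prod>m\<in>{2..p}. C m ^ r m)
      + (\<Sum>l\<in>{2..p}. if r l = 0 then 0
          else multichoose p n (r(l := r l - 1)) * (\<Prod>m\<in>{2..p}. C m ^ r m)))"
    unfolding Bpj_def multichoose_Suc
    by (intro sum.cong refl) (auto simp: distrib_right sum_distrib_right intro!: sum.cong)
  also have "\<dots> = Bpj p j C n + (\<Sum>l\<in>{2..p}. \<Sum>r\<in>Pset p j. if r l = 0 then 0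
          else multichoose p n (r(l := r l - 1)) * (\<Prod>m\<in>{2..p}. C m ^ r m))"
    unfolding sum.distrib Bpj_def by (subst sum.swap) simp
  finally show ?thesis by (simp add: sum_Pset_lowered)
qed

lemma Bpj_coeff_0: "Bpj p 0 C n = 1"
  by (simp add: Bpj_def Pset_0 multichoose_def)

lemma Bpj_coeff_1: "Bpj p 1 C n = 0"
  unfolding Bpj_def Pset_1 by simp

lemma Bpj_exponent_0: "j > 0 \<Longrightarrow> Bpj p j C 0 = 0"
proof -
  assume j: "j > 0"
  have "multichoose p 0 r = 0" if r: "r \<in> Pset p j" for r
  proof -
    have "(\<Sum>l\<in>{2..p}. r l) \<noteq> 0"
    proof
      assume "(\<Sum>l\<in>{2..p}. r l) = 0"
      then have "(\<Sum>l\<in>{2..p}. l * r l) = 0" by simp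
      with r j show False by (simp add: Pset_def)
    qed
    then have "0 \<in> {..<(\<Sum>l\<in>{2..p}. r l)}" by (simp only: lessThan_iff neq0_conv)
    then have "(\<Prod>i<(\<Sum>l\<in>{2..p}. r l). real 0 - real i) = 0" by (intro prod_zero) auto
    then show ?thesis by (simp add: multichoose_def)
  qed
  then show ?thesis by (simp add: Bpj_def)
qed

lemma Bpj_abs_le: "\<bar>Bpj p j C n\<bar> \<le> Bpj p j (\<lambda>l. \<bar>C l\<bar>) n"
proof -
  have "\<bar>Bpj p j C n\<bar> \<le> (\<Sum>r\<in>Pset p j. \<bar>multichoose p n r * (\<Prod>l\<in>{2..p}. C l ^ r l)\<bar>)"
    unfolding Bpj_def by (rule sum_abs)
  also have "\<dots> = Bpj p j (\<lambda>l. \<bar>C l\<bar>) n"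
    unfolding Bpj_def using multichoose_nonneg
    by (intro sum.cong refl) (simp add: abs_mult abs_prod power_abs)
  finally show ?thesis .
qed

lemma Bpj_nonneg: "(\<And>l. C l \<ge> 0) \<Longrightarrow> Bpj p j C n \<ge> 0"
  unfolding Bpj_def by (intro sum_nonneg mult_nonneg_nonneg multichoose_nonneg prod_nonneg) auto

definition pert_poly :: "nat \<Rightarrow> (nat \<Rightarrow> real) \<Rightarrow> real poly" where
  "pert_poly p C = 1 + (\<Sum>l\<in>{2..p}. monom (C l) l)"

lemma poly_pert_poly: "poly (pert_poly p C) y = 1 + (\<Sum>l\<in>{2..p}. C l * y ^ l)"
  by (simp add: pert_poly_def poly_sum poly_monom)

lemma degree_pert_poly: "degree (pert_poly p C) \<le> p"
  unfolding pert_poly_def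
  by (intro degree_add_le degree_sum_le) (auto intro: order.trans[OF degree_monom_le])

lemma coeff_pert_poly:
  "coeff (pert_poly p C) i = (if i = 0 then 1 else 0) + (if i \<in> {2..p} then C i else 0)"
proof -
  have "coeff (pert_poly p C) i = (if i = 0 then 1 else 0) + (\<Sum>l\<in>{2..p}. if l = i then C l else 0)"
    by (simp add: pert_poly_def coeff_sum coeff_monom)
  then show ?thesis by (simp add: sum.delta')
qed

lemma coeff_pert_poly_power: "coeff (pert_poly p C ^ n) j = Bpj p j C n"
proof (induction n arbitrary: j)
  case 0
  then show ?case by (cases "j = 0") (auto simp: Bpj_coeff_0 Bpj_exponent_0)
next
  case (Suc n)
  let ?B = "\<lambda>i. Bpj p i C n"
  have "coeff (pert_poly p C ^ Suc n) j = (\<Sum>i\<le>j. coeff (pert_poly p C) i * ?B (j - i))"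
    by (simp add: coeff_mult Suc.IH)
  also have "\<dots> = (\<Sum>i\<le>j. if i = 0 then ?B (j - i) else 0)
      + (\<Sum>i\<le>j. if i \<in> {2..p} then C i * ?B (j - i) else 0)"
    unfolding sum.distrib[symmetric] by (intro sum.cong refl) (simp add: coeff_pert_poly distrib_right)
  also have "(\<Sum>i\<le>j. if i \<in> {2..p} then C i * ?B (j - i) else 0)
      = (\<Sum>l\<in>{2..p}. if l \<le> j then C l * ?B (j - l) else 0)"
    by (simp add: sum.inter_filter[symmetric] Int_def conj_commute)
  finally show ?case by (simp add: Bpj_Suc)
qed

lemma pert_power_eq_sum_Bpj:
  assumes "p * n \<le> N"
  shows "(1 + (\<Sum>l\<in>{2..p}. C l * y ^ l)) ^ n = (\<Sum>j\<le>N. Bpj p j C n * y ^ j)"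
proof -
  have deg: "degree (pert_poly p C ^ n) \<le> N"
    using degree_power_le[of "pert_poly p C" n] degree_pert_poly[of p C] assms
    by (metis le_trans mult.commute mult_le_mono1)
  have "(1 + (\<Sum>l\<in>{2..p}. C l * y ^ l)) ^ n = poly (pert_poly p C ^ n) y"
    by (simp add: poly_pert_poly)
  also have "\<dots> = poly (\<Sum>j\<le>N. monom (coeff (pert_poly p C ^ n) j) j) y"
    by (simp only: poly_as_sum_of_monoms'[OF deg])
  also have "\<dots> = (\<Sum>j\<le>N. coeff (pert_poly p C ^ n) j * y ^ j)"
    by (simp add: poly_sum poly_monom)
  finally show ?thesis by (simp add: coeff_pert_poly_power)
qed

lemma pert_power_eq_truncation_plus_tail:
  assumes p: "p \<ge> 2"
  shows "(1 + (\<Sum>l\<in>{2..p}. C l * y ^ l)) ^ n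
    = (1 + (\<Sum>j=2..p. Bpj p j C n * y ^ j)) + (\<Sum>j=Suc p..p + p * n. Bpj p j C n * y ^ j)"
proof -
  have "{..p + p * n} = {..p} \<union> {Suc p..p + p * n}" by auto
  then have "(1 + (\<Sum>l\<in>{2..p}. C l * y ^ l)) ^ n
      = (\<Sum>j\<le>p. Bpj p j C n * y ^ j) + (\<Sum>j=Suc p..p + p * n. Bpj p j C n * y ^ j)"
    by (subst pert_power_eq_sum_Bpj[where N = "p + p * n"]) (auto intro: sum.union_disjoint)
  moreover have "{..p} = insert 0 (insert 1 {2..p})" using p by auto
  ultimately show ?thesis using Bpj_coeff_1[of p C n] by (simp add: Bpj_coeff_0)
qed

text \<open>The tail only contains powers \<open>t ^ j\<close> with \<open>j > p\<close>, and its coefficients are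
  dominated by those of the expansion with \<open>\<bar>C l\<bar>\<close> and \<open>\<tau>\<close>.\<close>
lemma pert_power_remainder_le:
  fixes C :: "nat \<Rightarrow> real"
  assumes p: "p \<ge> 2" and t: "0 \<le> t" "t \<le> \<tau>"
  shows "\<bar>(1 + (\<Sum>l\<in>{2..p}. C l * t ^ l)) ^ n - (1 + (\<Sum>j=2..p. Bpj p j C n * t ^ j))\<bar>
           \<le> (t / \<tau>) ^ (p + 1) * (1 + (\<Sum>l\<in>{2..p}. \<bar>C l\<bar> * \<tau> ^ l)) ^ n"
proof -
  define N where "N = p + p * n"
  define B' where "B' j = Bpj p j (\<lambda>l. \<bar>C l\<bar>) n" for j
  have B'_nonneg: "B' j \<ge> 0" for j unfolding B'_def by (rule Bpj_nonneg) simp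
  have "\<bar>(1 + (\<Sum>l\<in>{2..p}. C l * t ^ l)) ^ n - (1 + (\<Sum>j=2..p. Bpj p j C n * t ^ j))\<bar>
      = \<bar>\<Sum>j=Suc p..N. Bpj p j C n * t ^ j\<bar>"
    unfolding pert_power_eq_truncation_plus_tail[OF p] N_def by simp
  also have "\<dots> \<le> (\<Sum>j=Suc p..N. (t / \<tau>) ^ (p + 1) * (B' j * \<tau> ^ j))"
  proof (rule order.trans[OF sum_abs sum_mono])
    fix j assume j: "j \<in> {Suc p..N}"
    have "t ^ j \<le> (t / \<tau>) ^ (p + 1) * \<tau> ^ j"
    proof (cases "\<tau> = 0")
      case False
      then have "t ^ j = (t / \<tau>) ^ j * \<tau> ^ j" by (simp add: power_divide)
      also have "\<dots> \<le> (t / \<tau>) ^ (p + 1) * \<tau> ^ j"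
        using False t j by (intro mult_right_mono power_decreasing) auto
      finally show ?thesis .
    qed (use t j in \<open>auto simp: zero_power\<close>)
    then have "\<bar>Bpj p j C n * t ^ j\<bar> \<le> B' j * ((t / \<tau>) ^ (p + 1) * \<tau> ^ j)"
      unfolding abs_mult B'_def using t by (intro mult_mono Bpj_abs_le) (auto intro: Bpj_nonneg)
    then show "\<bar>Bpj p j C n * t ^ j\<bar> \<le> (t / \<tau>) ^ (p + 1) * (B' j * \<tau> ^ j)"
      by (simp add: mult.left_commute)
  qed
  also have "\<dots> \<le> (\<Sum>j\<le>N. (t / \<tau>) ^ (p + 1) * (B' j * \<tau> ^ j))"
    using t B'_nonneg by (intro sum_mono2) auto
  also have "\<dots> = (t / \<tau>) ^ (p + 1) * (\<Sum>j\<le>N. B' j * \<tau> ^ j)"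
    by (rule sum_distrib_left[symmetric])
  also have "(\<Sum>j\<le>N. B' j * \<tau> ^ j) = (1 + (\<Sum>l\<in>{2..p}. \<bar>C l\<bar> * \<tau> ^ l)) ^ n"
    unfolding B'_def by (rule pert_power_eq_sum_Bpj[symmetric]) (simp add: N_def)
  finally show ?thesis .
qed

section \<open>Polynomials vanishing to second order\<close>

definition monomial_deg :: "('m::finite \<Rightarrow> nat \<times> nat) \<Rightarrow> nat" where
  "monomial_deg \<alpha> = (\<Sum>i\<in>UNIV. fst (\<alpha> i) + snd (\<alpha> i))"

definition monomial_val :: "('m::finite \<Rightarrow> nat \<times> nat) \<Rightarrow> complex^'m \<Rightarrow> real" where
  "monomial_val \<alpha> u = (\<Prod>i\<in>UNIV. Re (u $ i) ^ fst (\<alpha> i) * Im (u $ i) ^ snd (\<alpha> i))"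

lemma poly_fun_deg_iff:
  "poly_fun_deg d f \<longleftrightarrow>
     (\<exists>c. \<forall>u. f u = (\<Sum>\<alpha>\<in>{\<alpha>. monomial_deg \<alpha> \<le> d}. c \<alpha> * monomial_val \<alpha> u))"
  by (simp add: poly_fun_deg_def monomial_deg_def monomial_val_def)

lemma finite_monomials_deg_le: "finite {\<alpha>::'m::finite \<Rightarrow> nat \<times> nat. monomial_deg \<alpha> \<le> d}"
proof (rule finite_subset)
  show "{\<alpha>::'m \<Rightarrow> nat \<times> nat. monomial_deg \<alpha> \<le> d} \<subseteq> {\<alpha>. \<forall>i. (i \<in> UNIV \<longrightarrow> \<alpha> i \<in> {0..d} \<times> {0..d})
      \<and> (i \<notin> UNIV \<longrightarrow> \<alpha> i = undefined)}"
  proof (intro subsetI CollectI allI conjI impI)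
    fix \<alpha> :: "'m \<Rightarrow> nat \<times> nat" and i assume "\<alpha> \<in> {\<alpha>. monomial_deg \<alpha> \<le> d}"
    moreover have "fst (\<alpha> i) + snd (\<alpha> i) \<le> monomial_deg \<alpha>"
      unfolding monomial_deg_def by (intro member_le_sum) auto
    ultimately show "\<alpha> i \<in> {0..d} \<times> {0..d}" by (cases "\<alpha> i") auto
  qed simp
  show "finite {\<alpha>::'m \<Rightarrow> nat \<times> nat. \<forall>i. (i \<in> UNIV \<longrightarrow> \<alpha> i \<in> {0..d} \<times> {0..d})
      \<and> (i \<notin> UNIV \<longrightarrow> \<alpha> i = undefined)}"
    by (intro finite_set_of_finite_funs) auto
qed

lemma monomial_val_scaleR: "monomial_val \<alpha> (e *\<^sub>R u) = e ^ monomial_deg \<alpha> * monomial_val \<alpha> u"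
proof -
  have "monomial_val \<alpha> (e *\<^sub>R u) = (\<Prod>i\<in>UNIV. e ^ (fst (\<alpha> i) + snd (\<alpha> i))
      * (Re (u $ i) ^ fst (\<alpha> i) * Im (u $ i) ^ snd (\<alpha> i)))"
    unfolding monomial_val_def by (intro prod.cong refl) (simp add: power_mult_distrib power_add)
  then show ?thesis
    by (simp add: prod.distrib monomial_deg_def monomial_val_def power_sum)
qed

lemma abs_monomial_val_le: "\<bar>monomial_val \<alpha> u\<bar> \<le> norm u ^ monomial_deg \<alpha>"
proof -
  have "\<bar>monomial_val \<alpha> u\<bar> = (\<Prod>i\<in>UNIV. \<bar>Re (u $ i)\<bar> ^ fst (\<alpha> i) * \<bar>Im (u $ i)\<bar> ^ snd (\<alpha> i))"
    by (simp add: monomial_val_def abs_prod abs_mult power_abs)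
  also have "\<dots> \<le> (\<Prod>i\<in>UNIV. norm u ^ fst (\<alpha> i) * norm u ^ snd (\<alpha> i))"
  proof (intro prod_mono conjI mult_mono power_mono)
    fix i
    have "norm (u $ i) \<le> norm u" by (rule Finite_Cartesian_Product.norm_nth_le)
    then show "\<bar>Re (u $ i)\<bar> \<le> norm u" "\<bar>Im (u $ i)\<bar> \<le> norm u"
      using abs_Re_le_cmod abs_Im_le_cmod order.trans by blast+
  qed auto
  also have "\<dots> = norm u ^ monomial_deg \<alpha>"
    by (simp add: monomial_deg_def power_sum prod.distrib power_add)
  finally show ?thesis .
qed

lemma poly_fun_deg_measurable:
  assumes "poly_fun_deg d f"
  shows "f \<in> borel_measurable borel"
proof -
  have [measurable]: "(\<lambda>x::complex^'m. x $ i) \<in> borel_measurable borel" for i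
    by (intro borel_measurable_continuous_onI continuous_on_component continuous_on_id)
  obtain c where "\<And>u. f u = (\<Sum>\<alpha>\<in>{\<alpha>. monomial_deg \<alpha> \<le> d}. c \<alpha> * monomial_val \<alpha> u)"
    using assms unfolding poly_fun_deg_iff by blast
  then have "f = (\<lambda>u. \<Sum>\<alpha>\<in>{\<alpha>. monomial_deg \<alpha> \<le> d}. c \<alpha> * monomial_val \<alpha> u)" by auto
  also have "\<dots> \<in> borel_measurable borel" unfolding monomial_val_def by measurable
  finally show ?thesis .
qed

text \<open>Restricted to a ray, the polynomial is a polynomial in the scale \<open>e\<close>, whose constant
  and linear coefficients are the value and the derivative at \<open>0\<close>.\<close>
lemma low_degree_terms_vanish:
  fixes a :: "complex^'m \<Rightarrow> real"
  assumes a: "\<And>u. a u = (\<Sum>\<alpha>\<in>A. c \<alpha> * monomial_val \<alpha> u)" and A: "finite A"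
    and a0: "a 0 = 0" and da: "(a has_derivative (\<lambda>_. 0)) (at 0)"
  shows "a u = (\<Sum>\<alpha>\<in>A. if 2 \<le> monomial_deg \<alpha> then c \<alpha> * monomial_val \<alpha> u else 0)"
proof -
  define coeff where "coeff k = (\<Sum>\<alpha>\<in>A. if monomial_deg \<alpha> = k then c \<alpha> * monomial_val \<alpha> u else 0)" for k
  define g where "g e = a (e *\<^sub>R u)" for e :: real
  have g_eq: "g e = (\<Sum>\<alpha>\<in>A. c \<alpha> * monomial_val \<alpha> u * e ^ monomial_deg \<alpha>)" for e
    unfolding g_def a by (intro sum.cong refl) (simp add: monomial_val_scaleR)
  have "coeff 0 = g 0"
    unfolding coeff_def g_eq by (intro sum.cong refl) simp
  then have coeff0: "coeff 0 = 0" using a0 by (simp add: g_def)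
  have "(g has_real_derivative
      (\<Sum>\<alpha>\<in>A. c \<alpha> * monomial_val \<alpha> u * (real (monomial_deg \<alpha>) * 0 ^ (monomial_deg \<alpha> - Suc 0)))) (at 0)"
    unfolding g_eq[abs_def] by (intro DERIV_sum DERIV_cmult DERIV_pow)
  moreover have "(g has_real_derivative 0) (at 0)"
  proof -
    have "((\<lambda>e. e *\<^sub>R u) has_derivative (\<lambda>e. e *\<^sub>R u)) (at 0)"
      by (auto intro!: derivative_eq_intros)
    from has_derivative_compose[OF this, of a "\<lambda>_. 0"] da
    have "(g has_derivative (\<lambda>_. 0)) (at 0)" by (simp add: g_def[abs_def])
    moreover have "(\<lambda>_. 0) = (*) (0::real)" by auto
    ultimately show ?thesis by (simp add: has_field_derivative_def)
  qed
  moreover have "(\<Sum>\<alpha>\<in>A. c \<alpha> * monomial_val \<alpha> u * (real (monomial_deg \<alpha>) * 0 ^ (monomial_deg \<alpha> - Suc 0)))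
      = coeff 1"
    unfolding coeff_def by (intro sum.cong refl) auto
  ultimately have coeff1: "coeff 1 = 0" using DERIV_unique by metis
  have "a u = coeff 0 + coeff 1
      + (\<Sum>\<alpha>\<in>A. if 2 \<le> monomial_deg \<alpha> then c \<alpha> * monomial_val \<alpha> u else 0)"
    unfolding a coeff_def sum.distrib[symmetric] by (intro sum.cong refl) auto
  then show ?thesis using coeff0 coeff1 by simp
qed

lemma power_le_power2_plus_power:
  fixes x :: real
  assumes "2 \<le> k" "k \<le> D" "0 \<le> x"
  shows "x ^ k \<le> x\<^sup>2 + x ^ D"
proof (cases "x \<le> 1")
  case True
  then have "x ^ k \<le> x\<^sup>2" using assms by (intro power_decreasing) auto
  then show ?thesis using assms by (simp add: add_increasing2)
next
  case False
  then have "x ^ k \<le> x ^ D" using assms by (intro power_increasing) auto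
  then show ?thesis using assms by (simp add: add_increasing)
qed

lemma poly_fun_deg_vanishing_order2_bound:
  fixes a :: "complex^'m \<Rightarrow> real"
  assumes "poly_fun_deg d a" "a 0 = 0" "(a has_derivative (\<lambda>_. 0)) (at 0)" "d \<le> D" "2 \<le> D"
  shows "\<exists>c\<ge>0. \<forall>u. \<bar>a u\<bar> \<le> c * ((norm u)\<^sup>2 + norm u ^ D)"
proof -
  define A where "A = {\<alpha>::'m \<Rightarrow> nat \<times> nat. monomial_deg \<alpha> \<le> d}"
  obtain c where c: "\<And>u. a u = (\<Sum>\<alpha>\<in>A. c \<alpha> * monomial_val \<alpha> u)"
    using assms(1) unfolding poly_fun_deg_iff A_def by blast
  have "\<bar>a u\<bar> \<le> (\<Sum>\<alpha>\<in>A. \<bar>c \<alpha>\<bar>) * ((norm u)\<^sup>2 + norm u ^ D)" for u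
  proof -
    have "a u = (\<Sum>\<alpha>\<in>A. if 2 \<le> monomial_deg \<alpha> then c \<alpha> * monomial_val \<alpha> u else 0)"
      by (rule low_degree_terms_vanish[OF c _ assms(2,3)]) (simp add: A_def finite_monomials_deg_le)
    then have "\<bar>a u\<bar> \<le> (\<Sum>\<alpha>\<in>A. \<bar>if 2 \<le> monomial_deg \<alpha> then c \<alpha> * monomial_val \<alpha> u else 0\<bar>)"
      by (simp only: sum_abs)
    also have "\<dots> \<le> (\<Sum>\<alpha>\<in>A. \<bar>c \<alpha>\<bar> * ((norm u)\<^sup>2 + norm u ^ D))"
    proof (intro sum_mono)
      fix \<alpha> assume "\<alpha> \<in> A"
      then have "2 \<le> monomial_deg \<alpha> \<Longrightarrow> \<bar>monomial_val \<alpha> u\<bar> \<le> (norm u)\<^sup>2 + norm u ^ D"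
        using assms(4) abs_monomial_val_le[of \<alpha> u] power_le_power2_plus_power[of "monomial_deg \<alpha>" D "norm u"]
        by (simp add: A_def)
      then show "\<bar>if 2 \<le> monomial_deg \<alpha> then c \<alpha> * monomial_val \<alpha> u else 0\<bar>
          \<le> \<bar>c \<alpha>\<bar> * ((norm u)\<^sup>2 + norm u ^ D)"
        by (auto simp: abs_mult intro!: mult_left_mono)
    qed
    finally show ?thesis by (simp add: sum_distrib_right)
  qed
  then show ?thesis by (intro exI[of _ "\<Sum>\<alpha>\<in>A. \<bar>c \<alpha>\<bar>"]) (auto intro: sum_nonneg)
qed

section \<open>Gaussian weights\<close>

lemma power_le_fact_mult_exp_minus_one:
  fixes y :: real
  assumes "0 \<le> y" "1 \<le> K"
  shows "y ^ K \<le> fact K * (exp y - 1)"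
proof -
  have "(\<Sum>n\<in>{0, K}. y ^ n /\<^sub>R fact n) \<le> (\<Sum>n. y ^ n /\<^sub>R fact n)"
    by (intro sum_le_suminf summable_exp_generic) (use assms in auto)
  then have "1 + y ^ K / fact K \<le> exp y"
    using assms by (simp add: exp_def divide_inverse_commute scaleR_conv_of_real)
  then show ?thesis by (simp add: field_simps)
qed

lemma exists_scale_le_exp:
  fixes c :: real
  assumes c: "c \<ge> 0" and K: "K \<ge> 1"
  shows "\<exists>\<tau>. 0 < \<tau> \<and> \<tau> \<le> 1 \<and> (\<forall>\<rho>. 1 + \<tau>\<^sup>2 * (c * (\<rho>\<^sup>2 + \<bar>\<rho>\<bar> ^ (2 * K))) \<le> exp (\<rho>\<^sup>2 / 2))"
proof -
  define M :: real where "M = 2 + 2 ^ K * fact K"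
  define \<tau> where "\<tau> = 1 / (1 + c * M)"
  have cM: "c * M \<ge> 0" using c by (simp add: M_def)
  have \<tau>: "0 < \<tau>" "\<tau> \<le> 1" unfolding \<tau>_def using cM by auto
  have \<tau>cM: "\<tau>\<^sup>2 * (c * M) \<le> 1"
  proof -
    have "\<tau>\<^sup>2 * (c * M) \<le> \<tau> * (c * M)"
      using \<tau> cM by (intro mult_right_mono) (auto simp: power2_eq_square mult_left_le_one_le)
    also have "\<dots> \<le> 1" using cM by (simp add: \<tau>_def)
    finally show ?thesis .
  qed
  have "1 + \<tau>\<^sup>2 * (c * (\<rho>\<^sup>2 + \<bar>\<rho>\<bar> ^ (2 * K))) \<le> exp (\<rho>\<^sup>2 / 2)" for \<rho> :: real
  proof -
    define y where "y = \<rho>\<^sup>2 / 2"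
    have y: "y \<ge> 0" by (simp add: y_def)
    have "\<rho>\<^sup>2 = 2 * y" by (simp add: y_def)
    then have "\<rho>\<^sup>2 \<le> 2 * (exp y - 1)" using exp_ge_add_one_self[of y] by argo
    moreover have "\<bar>\<rho>\<bar> ^ (2 * K) \<le> 2 ^ K * (fact K * (exp y - 1))"
    proof -
      have "\<bar>\<rho>\<bar> ^ (2 * K) = 2 ^ K * y ^ K"
        by (simp add: y_def power_mult power_divide)
      then show ?thesis using power_le_fact_mult_exp_minus_one[OF y K] by simp
    qed
    moreover have "M * (exp y - 1) = 2 * (exp y - 1) + 2 ^ K * (fact K * (exp y - 1))"
      by (simp add: M_def algebra_simps)
    ultimately have "\<rho>\<^sup>2 + \<bar>\<rho>\<bar> ^ (2 * K) \<le> M * (exp y - 1)" by linarith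
    then have "\<tau>\<^sup>2 * (c * (\<rho>\<^sup>2 + \<bar>\<rho>\<bar> ^ (2 * K))) \<le> \<tau>\<^sup>2 * (c * (M * (exp y - 1)))"
      using c by (intro mult_left_mono) auto
    also have "\<dots> = (\<tau>\<^sup>2 * (c * M)) * (exp y - 1)" by (simp add: algebra_simps)
    also have "\<dots> \<le> exp y - 1" using \<tau>cM cM y by (intro mult_left_le_one_le) auto
    finally show ?thesis by (simp add: y_def)
  qed
  then show ?thesis using \<tau> by blast
qed

lemma one_plus_power_le_exp:
  fixes \<rho> :: real
  assumes "0 \<le> \<rho>"
  shows "1 + \<rho> ^ r \<le> (2 + 4 ^ r * fact r) * exp (\<rho>\<^sup>2 / 4)"
proof -
  have "\<rho> ^ r \<le> 1 + \<rho> ^ (2 * r)"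
  proof (cases "\<rho> \<le> 1")
    case True
    then show ?thesis using assms by (simp add: power_le_one add_increasing2)
  next
    case False
    then show ?thesis by (simp add: power_increasing add_increasing)
  qed
  also have "\<rho> ^ (2 * r) = 4 ^ r * (\<rho>\<^sup>2 / 4) ^ r"
    by (simp add: power_mult power_divide)
  also have "(\<rho>\<^sup>2 / 4) ^ r \<le> fact r * exp (\<rho>\<^sup>2 / 4)"
  proof (cases "r = 0")
    case False
    then have "(\<rho>\<^sup>2 / 4) ^ r \<le> fact r * (exp (\<rho>\<^sup>2 / 4) - 1)"
      by (intro power_le_fact_mult_exp_minus_one) auto
    also have "\<dots> \<le> fact r * exp (\<rho>\<^sup>2 / 4)" by (simp add: mult_left_mono)
    finally show ?thesis .
  qed simp
  finally have "\<rho> ^ r \<le> 1 + 4 ^ r * fact r * exp (\<rho>\<^sup>2 / 4)" by (simp add: mult_left_mono)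
  moreover have "1 \<le> exp (\<rho>\<^sup>2 / 4)" by simp
  moreover have "(2 + 4 ^ r * fact r) * exp (\<rho>\<^sup>2 / 4) = 2 * exp (\<rho>\<^sup>2 / 4) + 4 ^ r * fact r * exp (\<rho>\<^sup>2 / 4)"
    by (simp add: algebra_simps)
  ultimately show ?thesis by argo
qed

text \<open>The Gaussian factorises over an orthonormal basis, and each factor is a rescaled
  normal density.\<close>
lemma integrable_exp_neg_norm_sq:
  assumes b: "b > 0"
  shows "integrable lborel (\<lambda>u::'a::euclidean_space. exp (- b * (norm u)\<^sup>2))"
proof (rule integrableI_bounded)
  define \<sigma> where "\<sigma> = sqrt (1 / (2 * b))"
  have \<sigma>: "\<sigma> > 0" "\<sigma>\<^sup>2 = 1 / (2 * b)" using b by (auto simp: \<sigma>_def)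
  have "(\<lambda>x::real. exp (- b * x\<^sup>2)) = (\<lambda>x. sqrt (2 * pi * \<sigma>\<^sup>2) * normal_density 0 \<sigma> x)"
    using b \<sigma> by (auto simp: normal_density_def)
  then have "integrable lborel (\<lambda>x::real. exp (- b * x\<^sup>2))" using \<sigma> by simp
  then have finite_1d: "(\<integral>\<^sup>+ x. ennreal (exp (- b * x\<^sup>2)) \<partial>lborel) < \<infinity>"
    unfolding integrable_iff_bounded by simp
  have factor: "ennreal (norm (exp (- b * (norm u)\<^sup>2))) = (\<Prod>i\<in>Basis. ennreal (exp (- b * (u \<bullet> i)\<^sup>2)))"
    for u :: 'a
  proof -
    have "(norm u)\<^sup>2 = (\<Sum>i\<in>Basis. (u \<bullet> i) * (u \<bullet> i))"
      unfolding power2_norm_eq_inner by (rule euclidean_inner)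
    then have "exp (- b * (norm u)\<^sup>2) = (\<Prod>i\<in>Basis. exp (- b * (u \<bullet> i)\<^sup>2))"
      by (simp add: sum_distrib_left exp_sum power2_eq_square)
    then show ?thesis by (simp add: prod_ennreal prod_nonneg)
  qed
  have "(\<integral>\<^sup>+ u. ennreal (norm (exp (- b * (norm u)\<^sup>2))) \<partial>(lborel::'a measure))
      = (\<integral>\<^sup>+ u. (\<Prod>i\<in>Basis. ennreal (exp (- b * (u \<bullet> i)\<^sup>2))) \<partial>(lborel::'a measure))"
    by (simp only: factor)
  also have "\<dots> = (\<Prod>i\<in>(Basis::'a set). \<integral>\<^sup>+ x. ennreal (exp (- b * x\<^sup>2)) \<partial>lborel)"
    by (rule nn_integral_lborel_prod[where f = "\<lambda>i x. ennreal (exp (- b * x\<^sup>2))"]) auto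
  also have "\<dots> < \<infinity>" using finite_1d by (simp add: less_top[symmetric] power_eq_top_ennreal)
  finally show "(\<integral>\<^sup>+ u. ennreal (norm (exp (- b * (norm u)\<^sup>2))) \<partial>(lborel::'a measure)) < \<infinity>" .
qed measurable

lemma integrable_gaussian_weight:
  fixes F :: "'a::euclidean_space \<Rightarrow> real"
  assumes F: "F \<in> borel_measurable borel" and F_le: "\<And>u. \<bar>F u\<bar> \<le> C * (1 + norm u ^ r)"
  shows "integrable lborel (\<lambda>u. exp (- (norm u)\<^sup>2 / 2) * \<bar>F u\<bar>)"
proof (rule Bochner_Integration.integrable_bound)
  define M where "M = \<bar>C\<bar> * (2 + 4 ^ r * fact r)"
  show "integrable lborel (\<lambda>u::'a. M * exp (- (1/4) * (norm u)\<^sup>2))"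
    by (intro integrable_mult_right integrable_exp_neg_norm_sq) simp
  show "AE u in lborel. norm (exp (- (norm u)\<^sup>2 / 2) * \<bar>F u\<bar>) \<le> norm (M * exp (- (1/4) * (norm u)\<^sup>2))"
  proof (intro AE_I2)
    fix u :: 'a
    have "\<bar>F u\<bar> \<le> \<bar>C\<bar> * (1 + norm u ^ r)"
      using F_le[of u] by (rule order.trans) (intro mult_right_mono; simp)
    also have "\<dots> \<le> M * exp ((norm u)\<^sup>2 / 4)"
      unfolding M_def mult.assoc by (intro mult_left_mono one_plus_power_le_exp) auto
    finally have "exp (- (norm u)\<^sup>2 / 2) * \<bar>F u\<bar> \<le> exp (- (norm u)\<^sup>2 / 2) * (M * exp ((norm u)\<^sup>2 / 4))"
      by (intro mult_left_mono) auto
    also have "\<dots> = M * exp (- (1/4) * (norm u)\<^sup>2)"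
      by (simp add: exp_add[symmetric] algebra_simps)
    finally show "norm (exp (- (norm u)\<^sup>2 / 2) * \<bar>F u\<bar>) \<le> norm (M * exp (- (1/4) * (norm u)\<^sup>2))"
      by (simp add: M_def)
  qed
qed (use F in measurable)

section \<open>Termwise integration of the series for \<open>G\<close>\<close>

lemma summable_inverse_Suc_square: "summable (\<lambda>n. 1 / (real (Suc n))\<^sup>2)"
proof -
  have "summable (\<lambda>n. inverse (real n ^ 2))" by (rule inverse_power_summable) simp
  then show ?thesis by (subst (asm) summable_Suc_iff[symmetric]) (simp add: divide_inverse)
qed

lemma summable_Gfun_series:
  assumes "\<bar>y\<bar> \<le> 1"
  shows "summable (\<lambda>n. y ^ Suc n / (real (Suc n))\<^sup>2)"
proof (rule summable_comparison_test'[OF summable_inverse_Suc_square])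
  fix n
  have "\<bar>y\<bar> ^ Suc n \<le> 1" using assms by (intro power_le_one) auto
  then show "norm (y ^ Suc n / (real (Suc n))\<^sup>2) \<le> 1 / (real (Suc n))\<^sup>2"
    by (simp add: power_abs divide_right_mono del: power_Suc of_nat_Suc)
qed

lemma integral_suminf_dominated:
  fixes f :: "nat \<Rightarrow> 'a \<Rightarrow> real"
  assumes f: "\<And>n. integrable M (f n)" and W: "integrable M W" and c: "summable c"
    and f_le: "\<And>n u. \<bar>f n u\<bar> \<le> c n * W u"
  shows "integrable M (\<lambda>u. \<Sum>n. f n u)"
    and "summable (\<lambda>n. integral\<^sup>L M (f n))"
    and "(\<integral>u. (\<Sum>n. f n u) \<partial>M) = (\<Sum>n. integral\<^sup>L M (f n))"
proof -
  have pointwise: "summable (\<lambda>n. norm (f n u))" for u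
    by (rule summable_comparison_test'[OF summable_mult2[OF c, of "W u"]]) (simp add: f_le)
  have "norm (\<integral>u. norm (f n u) \<partial>M) \<le> c n * (\<integral>u. W u \<partial>M)" for n
  proof -
    have "0 \<le> (\<integral>u. norm (f n u) \<partial>M)" by (rule integral_nonneg_AE) simp
    moreover have "(\<integral>u. norm (f n u) \<partial>M) \<le> (\<integral>u. c n * W u \<partial>M)"
      using f W f_le by (intro integral_mono) auto
    ultimately show ?thesis by simp
  qed
  then have integrals: "summable (\<lambda>n. \<integral>u. norm (f n u) \<partial>M)"
    by (rule summable_comparison_test'[OF summable_mult2[OF c]])
  show "integrable M (\<lambda>u. \<Sum>n. f n u)"
    by (rule integrable_suminf[OF f AE_I2[OF pointwise] integrals])
  show "summable (\<lambda>n. integral\<^sup>L M (f n))"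
    by (rule summable_comparison_test'[OF integrals]) (simp add: integral_norm_bound)
  show "(\<integral>u. (\<Sum>n. f n u) \<partial>M) = (\<Sum>n. integral\<^sup>L M (f n))"
    by (rule integral_suminf[OF f AE_I2[OF pointwise] integrals])
qed

lemma Gfun_mult_eq_suminf:
  assumes "\<bar>y\<bar> \<le> 1"
  shows "Gfun y * z = 1 / (4 * pi\<^sup>2) * (\<Sum>n. 1 / (real (Suc n))\<^sup>2 * (y ^ Suc n * z))"
proof -
  have "Gfun y * z = 1 / (4 * pi\<^sup>2) * ((\<Sum>n. y ^ Suc n / (real (Suc n))\<^sup>2) * z)"
    by (simp add: Gfun_def)
  also have "(\<Sum>n. y ^ Suc n / (real (Suc n))\<^sup>2) * z = (\<Sum>n. y ^ Suc n / (real (Suc n))\<^sup>2 * z)"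
    by (rule suminf_mult2[OF summable_Gfun_series[OF assms]])
  also have "\<dots> = (\<Sum>n. 1 / (real (Suc n))\<^sup>2 * (y ^ Suc n * z))"
    by (rule arg_cong[where f = suminf]) (simp add: fun_eq_iff)
  finally show ?thesis .
qed

lemma Gfun_integral_series:
  fixes E F W :: "'a \<Rightarrow> real"
  assumes E: "E \<in> borel_measurable M" and F: "F \<in> borel_measurable M" and W: "integrable M W"
    and E_le: "\<And>u. \<bar>E u\<bar> \<le> 1" and EF_le: "\<And>u. \<bar>E u * F u\<bar> \<le> W u"
  shows "integrable M (\<lambda>u. E u ^ Suc n * F u)"
    and "integrable M (\<lambda>u. Gfun (E u) * F u)"
    and "summable (\<lambda>n. 1 / (real (Suc n))\<^sup>2 * (\<integral>u. E u ^ Suc n * F u \<partial>M))"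
    and "(\<integral>u. Gfun (E u) * F u \<partial>M)
          = 1 / (4 * pi\<^sup>2) * (\<Sum>n. 1 / (real (Suc n))\<^sup>2 * (\<integral>u. E u ^ Suc n * F u \<partial>M))"
proof -
  define c where "c n = 1 / (real (Suc n))\<^sup>2" for n
  define f where "f n u = c n * (E u ^ Suc n * F u)" for n u
  have EnF_le: "\<bar>E u ^ Suc n * F u\<bar> \<le> W u" for n u
  proof -
    have "\<bar>E u ^ Suc n * F u\<bar> = \<bar>E u\<bar> ^ n * \<bar>E u * F u\<bar>" by (simp add: abs_mult power_abs)
    also have "\<dots> \<le> 1 * W u" using E_le[of u] EF_le[of u] by (intro mult_mono power_le_one) auto
    finally show ?thesis by simp
  qed
  show EnF: "integrable M (\<lambda>u. E u ^ Suc n * F u)" for n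
  proof (rule Bochner_Integration.integrable_bound[OF W])
    show "AE u in M. norm (E u ^ Suc n * F u) \<le> norm (W u)"
      using EnF_le by (intro AE_I2) (metis abs_ge_self order.trans real_norm_def)
  qed (use E F in measurable)
  have f_le: "\<bar>f n u\<bar> \<le> c n * W u" for n u
    using mult_left_mono[OF EnF_le, of "c n"] by (simp add: f_def c_def abs_mult)
  note series = integral_suminf_dominated[of M f, OF _ W _ f_le]
  have f: "integrable M (f n)" for n unfolding f_def using EnF by simp
  have c: "summable c" unfolding c_def by (rule summable_inverse_Suc_square)
  have integral_f: "integral\<^sup>L M (f n) = c n * (\<integral>u. E u ^ Suc n * F u \<partial>M)" for n
    unfolding f_def[abs_def] by (rule integral_mult_right_zero)
  have G: "Gfun (E u) * F u = 1 / (4 * pi\<^sup>2) * (\<Sum>n. f n u)" for u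
    unfolding f_def c_def by (rule Gfun_mult_eq_suminf[OF E_le])
  show "integrable M (\<lambda>u. Gfun (E u) * F u)"
    unfolding G by (intro integrable_mult_right series(1)[OF f c])
  show "summable (\<lambda>n. 1 / (real (Suc n))\<^sup>2 * (\<integral>u. E u ^ Suc n * F u \<partial>M))"
    using series(2)[OF f c] by (simp only: integral_f c_def)
  show "(\<integral>u. Gfun (E u) * F u \<partial>M)
      = 1 / (4 * pi\<^sup>2) * (\<Sum>n. 1 / (real (Suc n))\<^sup>2 * (\<integral>u. E u ^ Suc n * F u \<partial>M))"
    unfolding G integral_mult_right_zero series(3)[OF f c] by (simp only: integral_f c_def)
qed

lemma summable_weighted_close:
  fixes w x y :: "nat \<Rightarrow> real"
  assumes w: "summable w" "\<And>n. w n \<ge> 0" and x: "summable (\<lambda>n. w n * x n)"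
    and close: "\<And>n. \<bar>x n - y n\<bar> \<le> e"
  shows "summable (\<lambda>n. w n * y n)"
    and "\<bar>(\<Sum>n. w n * x n) - (\<Sum>n. w n * y n)\<bar> \<le> e * (\<Sum>n. w n)"
proof -
  have diff_le: "norm (w n * (x n - y n)) \<le> e * w n" for n
    using mult_left_mono[OF close w(2)] w(2) by (simp add: abs_mult mult.commute)
  have diff: "summable (\<lambda>n. w n * (x n - y n))"
    by (rule summable_comparison_test'[OF summable_mult[OF w(1)]]) (use diff_le in auto)
  have "summable (\<lambda>n. w n * x n - w n * (x n - y n))" using summable_diff[OF x diff] .
  then show y: "summable (\<lambda>n. w n * y n)" by (simp add: algebra_simps)
  have "\<bar>(\<Sum>n. w n * x n) - (\<Sum>n. w n * y n)\<bar> = norm (\<Sum>n. w n * (x n - y n))"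
    using suminf_diff[OF x y] by (simp add: algebra_simps)
  also have "\<dots> \<le> (\<Sum>n. e * w n)"
    by (rule norm_suminf_le[OF diff_le summable_mult[OF w(1)]])
  also have "\<dots> = e * (\<Sum>n. w n)" by (rule suminf_mult[OF w(1)])
  finally show "\<bar>(\<Sum>n. w n * x n) - (\<Sum>n. w n * y n)\<bar> \<le> e * (\<Sum>n. w n)" .
qed

lemma integrable_integral_close:
  fixes f g h :: "'a \<Rightarrow> real"
  assumes f: "integrable M f" and g: "g \<in> borel_measurable M" and h: "integrable M h"
    and close: "\<And>u. \<bar>f u - g u\<bar> \<le> h u"
  shows "integrable M g" and "\<bar>integral\<^sup>L M f - integral\<^sup>L M g\<bar> \<le> integral\<^sup>L M h"
proof -
  have diff: "integrable M (\<lambda>u. f u - g u)"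
  proof (rule Bochner_Integration.integrable_bound[OF h])
    show "AE u in M. norm (f u - g u) \<le> norm (h u)"
      using close by (intro AE_I2) (metis abs_ge_self order.trans real_norm_def)
  qed (use f g in measurable)
  from Bochner_Integration.integrable_diff[OF f diff] show g_int: "integrable M g" by simp
  have "\<bar>integral\<^sup>L M f - integral\<^sup>L M g\<bar> = \<bar>\<integral>u. f u - g u \<partial>M\<bar>" using f g_int by simp
  also have "\<dots> \<le> (\<integral>u. \<bar>f u - g u\<bar> \<partial>M)"
    using integral_norm_bound[of M "\<lambda>u. f u - g u"] by simp
  also have "\<dots> \<le> integral\<^sup>L M h"
    using diff h close by (intro integral_mono) auto
  finally show "\<bar>integral\<^sup>L M f - integral\<^sup>L M g\<bar> \<le> integral\<^sup>L M h" .
qed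

lemma Gfun_integral_approx:
  fixes E F W :: "'a \<Rightarrow> real" and P :: "nat \<Rightarrow> 'a \<Rightarrow> real"
  assumes E: "E \<in> borel_measurable M" and F: "F \<in> borel_measurable M" and W: "integrable M W"
    and E_le: "\<And>u. \<bar>E u\<bar> \<le> 1" and EF_le: "\<And>u. \<bar>E u * F u\<bar> \<le> W u"
    and P: "\<And>n. P n \<in> borel_measurable M"
    and approx: "\<And>n u. n \<ge> 1 \<Longrightarrow> \<bar>E u ^ n * F u - P n u\<bar> \<le> q * W u"
  shows "integrable M (\<lambda>u. Gfun (E u) * F u)"
    and "\<forall>n\<ge>1. integrable M (P n)"
    and "summable (\<lambda>n. 1 / (real (Suc n))\<^sup>2 * integral\<^sup>L M (P (Suc n)))"
    and "\<bar>(\<integral>u. Gfun (E u) * F u \<partial>M) - 1 / (4 * pi\<^sup>2) * (\<Sum>n. 1 / (real (Suc n))\<^sup>2 * integral\<^sup>L M (P (Suc n)))\<bar>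
           \<le> 1 / (4 * pi\<^sup>2) * (\<Sum>n. 1 / (real (Suc n))\<^sup>2) * (\<integral>u. W u \<partial>M) * q"
proof -
  note G = Gfun_integral_series[OF E F W E_le EF_le]
  have close: "integrable M (P (Suc n))"
    "\<bar>(\<integral>u. E u ^ Suc n * F u \<partial>M) - integral\<^sup>L M (P (Suc n))\<bar> \<le> (\<integral>u. q * W u \<partial>M)" for n
  proof -
    have "\<bar>E u ^ Suc n * F u - P (Suc n) u\<bar> \<le> q * W u" for u by (rule approx) simp
    note close = integrable_integral_close[OF G(1) P integrable_mult_right[OF W] this]
    show "integrable M (P (Suc n))" by (rule close(1))
    show "\<bar>(\<integral>u. E u ^ Suc n * F u \<partial>M) - integral\<^sup>L M (P (Suc n))\<bar> \<le> (\<integral>u. q * W u \<partial>M)"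
      by (rule close(2))
  qed
  show "integrable M (\<lambda>u. Gfun (E u) * F u)" by (rule G(2))
  show "\<forall>n\<ge>1. integrable M (P n)"
  proof (intro allI impI)
    fix n :: nat assume "n \<ge> 1"
    then obtain m where "n = Suc m" by (cases n) auto
    then show "integrable M (P n)" using close(1) by simp
  qed
  have weights: "0 \<le> 1 / (real (Suc n))\<^sup>2" for n by simp
  note series = summable_weighted_close[OF summable_inverse_Suc_square weights G(3) close(2)]
  show "summable (\<lambda>n. 1 / (real (Suc n))\<^sup>2 * integral\<^sup>L M (P (Suc n)))" by (rule series(1))
  have "\<bar>(\<integral>u. Gfun (E u) * F u \<partial>M) - 1 / (4 * pi\<^sup>2) * (\<Sum>n. 1 / (real (Suc n))\<^sup>2 * integral\<^sup>L M (P (Suc n)))\<bar>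
      = 1 / (4 * pi\<^sup>2) * \<bar>(\<Sum>n. 1 / (real (Suc n))\<^sup>2 * (\<integral>u. E u ^ Suc n * F u \<partial>M))
        - (\<Sum>n. 1 / (real (Suc n))\<^sup>2 * integral\<^sup>L M (P (Suc n)))\<bar>"
    unfolding G(4) right_diff_distrib[symmetric] by (simp add: abs_mult)
  also have "\<dots> \<le> 1 / (4 * pi\<^sup>2) * ((\<integral>u. q * W u \<partial>M) * (\<Sum>n. 1 / (real (Suc n))\<^sup>2))"
    by (intro mult_left_mono series(2)) auto
  finally show "\<bar>(\<integral>u. Gfun (E u) * F u \<partial>M) - 1 / (4 * pi\<^sup>2) * (\<Sum>n. 1 / (real (Suc n))\<^sup>2 * integral\<^sup>L M (P (Suc n)))\<bar>
      \<le> 1 / (4 * pi\<^sup>2) * (\<Sum>n. 1 / (real (Suc n))\<^sup>2) * (\<integral>u. W u \<partial>M) * q"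
    by (simp add: ac_simps)
qed

section \<open>The perturbed Gaussian\<close>

lemma abs_gaussian_pert_le:
  fixes C :: "nat \<Rightarrow> real"
  assumes t: "0 \<le> t" "t \<le> \<tau>" and S: "1 + (\<Sum>j=2..p. \<bar>C j\<bar> * \<tau> ^ j) \<le> exp (x / 2)"
  shows "\<bar>exp (- x) * (1 + (\<Sum>j=2..p. C j * t ^ j))\<bar> \<le> exp (- x / 2)"
proof -
  have "\<bar>\<Sum>j=2..p. C j * t ^ j\<bar> \<le> (\<Sum>j=2..p. \<bar>C j\<bar> * \<tau> ^ j)"
    by (rule order.trans[OF sum_abs sum_mono])
       (use t in \<open>auto simp: abs_mult intro!: mult_left_mono power_mono\<close>)
  then have "\<bar>1 + (\<Sum>j=2..p. C j * t ^ j)\<bar> \<le> exp (x / 2)" using S by linarith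
  then have "\<bar>exp (- x) * (1 + (\<Sum>j=2..p. C j * t ^ j))\<bar> \<le> exp (- x) * exp (x / 2)"
    by (simp add: abs_mult)
  also have "\<dots> = exp (- x / 2)" by (simp flip: exp_add)
  finally show ?thesis .
qed

lemma gaussian_pert_power_approx:
  fixes C :: "nat \<Rightarrow> real"
  assumes p: "p \<ge> 2" and t: "0 \<le> t" "t \<le> \<tau>" and n: "n \<ge> 1" and x: "0 \<le> x"
    and S: "1 + (\<Sum>j=2..p. \<bar>C j\<bar> * \<tau> ^ j) \<le> exp (x / 2)"
  shows "\<bar>(exp (- x) * (1 + (\<Sum>j=2..p. C j * t ^ j))) ^ n
           - exp (- real n * x) * (1 + (\<Sum>j=2..p. Bpj p j C n * t ^ j))\<bar>
         \<le> (t / \<tau>) ^ (p + 1) * exp (- x / 2)"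
proof -
  define q where "q = (t / \<tau>) ^ (p + 1)"
  have q: "q \<ge> 0" using t by (simp add: q_def)
  have "(exp (- x) * (1 + (\<Sum>j=2..p. C j * t ^ j))) ^ n
      = exp (- real n * x) * (1 + (\<Sum>j=2..p. C j * t ^ j)) ^ n"
    by (simp add: power_mult_distrib flip: exp_of_nat_mult)
  then have "\<bar>(exp (- x) * (1 + (\<Sum>j=2..p. C j * t ^ j))) ^ n
           - exp (- real n * x) * (1 + (\<Sum>j=2..p. Bpj p j C n * t ^ j))\<bar>
      = exp (- real n * x) * \<bar>(1 + (\<Sum>j=2..p. C j * t ^ j)) ^ n - (1 + (\<Sum>j=2..p. Bpj p j C n * t ^ j))\<bar>"
    by (simp add: abs_mult flip: right_diff_distrib)
  also have "\<dots> \<le> exp (- real n * x) * (q * exp (x / 2) ^ n)"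
  proof (rule mult_left_mono)
    have "\<bar>(1 + (\<Sum>j=2..p. C j * t ^ j)) ^ n - (1 + (\<Sum>j=2..p. Bpj p j C n * t ^ j))\<bar>
        \<le> q * (1 + (\<Sum>j=2..p. \<bar>C j\<bar> * \<tau> ^ j)) ^ n"
      unfolding q_def by (rule pert_power_remainder_le[OF p t])
    also have "\<dots> \<le> q * exp (x / 2) ^ n"
      using S q by (intro mult_left_mono power_mono add_nonneg_nonneg sum_nonneg) (use t in auto)
    finally show "\<bar>(1 + (\<Sum>j=2..p. C j * t ^ j)) ^ n - (1 + (\<Sum>j=2..p. Bpj p j C n * t ^ j))\<bar>
        \<le> q * exp (x / 2) ^ n" .
  qed simp
  also have "\<dots> = q * exp (- (real n * x / 2))"
    by (simp add: algebra_simps flip: exp_add exp_of_nat_mult)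
  also have "\<dots> \<le> q * exp (- x / 2)"
    using n x q by (intro mult_left_mono) (auto simp: mult_le_cancel_right1)
  finally show ?thesis by (simp add: q_def)
qed

lemma Gfun_gaussian_pert_estimate:
  fixes F :: "'a::euclidean_space \<Rightarrow> real" and a :: "nat \<Rightarrow> 'a \<Rightarrow> real"
  assumes F: "F \<in> borel_measurable borel"
    and a: "\<And>j. j \<in> {2..p} \<Longrightarrow> a j \<in> borel_measurable borel"
    and W: "integrable lborel (\<lambda>u. exp (- (norm u)\<^sup>2 / 2) * \<bar>F u\<bar>)"
    and p: "p \<ge> 2" and t: "0 \<le> t" "t \<le> \<tau>"
    and S: "\<And>u. 1 + (\<Sum>j=2..p. \<bar>a j u\<bar> * \<tau> ^ j) \<le> exp ((norm u)\<^sup>2 / 2)"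
  shows "(\<forall>u. \<bar>exp (- (norm u)\<^sup>2) * (1 + (\<Sum>j=2..p. a j u * t ^ j))\<bar> \<le> 1)
   \<and> integrable lborel
       (\<lambda>u. Gfun (exp (- (norm u)\<^sup>2) * (1 + (\<Sum>j=2..p. a j u * t ^ j))) * F u)
   \<and> (\<forall>n\<ge>1. integrable lborel
       (\<lambda>u. exp (- real n * (norm u)\<^sup>2) *
            (1 + (\<Sum>j=2..p. Bpj p j (\<lambda>l. a l u) n * t ^ j)) * F u))
   \<and> summable (\<lambda>n. (1 / (real (Suc n))\<^sup>2) *
       (\<integral>u. exp (- real (Suc n) * (norm u)\<^sup>2) *
            (1 + (\<Sum>j=2..p. Bpj p j (\<lambda>l. a l u) (Suc n) * t ^ j)) * F u \<partial>lborel))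
   \<and> \<bar>(\<integral>u. Gfun (exp (- (norm u)\<^sup>2) * (1 + (\<Sum>j=2..p. a j u * t ^ j))) * F u \<partial>lborel)
      - (1 / (4 * pi\<^sup>2)) * (\<Sum>n. (1 / (real (Suc n))\<^sup>2) *
          (\<integral>u. exp (- real (Suc n) * (norm u)\<^sup>2) *
            (1 + (\<Sum>j=2..p. Bpj p j (\<lambda>l. a l u) (Suc n) * t ^ j)) * F u \<partial>lborel))\<bar>
     \<le> (1 / (4 * pi\<^sup>2)) * (\<Sum>n. 1 / (real (Suc n))\<^sup>2)
        * (\<integral>u. exp (- (norm u)\<^sup>2 / 2) * \<bar>F u\<bar> \<partial>lborel) * (t / \<tau>) ^ (p + 1)"
proof -
  define E where "E u = exp (- (norm u)\<^sup>2) * (1 + (\<Sum>j=2..p. a j u * t ^ j))" for u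
  define P where "P n u = exp (- real n * (norm u)\<^sup>2) *
      (1 + (\<Sum>j=2..p. Bpj p j (\<lambda>l. a l u) n * t ^ j)) * F u" for n u
  define W where "W u = exp (- (norm u)\<^sup>2 / 2) * \<bar>F u\<bar>" for u
  have E_le: "\<bar>E u\<bar> \<le> exp (- (norm u)\<^sup>2 / 2)" for u
    unfolding E_def using t S by (rule abs_gaussian_pert_le)
  have E_le_1: "\<bar>E u\<bar> \<le> 1" for u
    using E_le[of u] by (rule order.trans) simp
  have EF_le: "\<bar>E u * F u\<bar> \<le> W u" for u
    unfolding W_def abs_mult by (intro mult_right_mono E_le) simp
  have approx: "\<bar>E u ^ n * F u - P n u\<bar> \<le> (t / \<tau>) ^ (p + 1) * W u" if "n \<ge> 1" for n u
  proof -
    have "\<bar>E u ^ n * F u - P n u\<bar> = \<bar>E u ^ n - exp (- real n * (norm u)\<^sup>2) *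
        (1 + (\<Sum>j=2..p. Bpj p j (\<lambda>l. a l u) n * t ^ j))\<bar> * \<bar>F u\<bar>"
      by (simp add: P_def abs_mult flip: left_diff_distrib)
    also have "\<dots> \<le> (t / \<tau>) ^ (p + 1) * exp (- (norm u)\<^sup>2 / 2) * \<bar>F u\<bar>"
      unfolding E_def by (intro mult_right_mono gaussian_pert_power_approx[OF p t that _ S]) auto
    finally show ?thesis by (simp add: W_def)
  qed
  have E: "E \<in> borel_measurable lborel" and P: "P n \<in> borel_measurable lborel" for n
    unfolding E_def P_def using F a by (auto intro!: borel_measurable_sum simp: Bpj_def)
  have "\<forall>u. \<bar>E u\<bar> \<le> 1" using E_le_1 by blast
  with Gfun_integral_approx[OF E _ W[folded W_def] E_le_1 EF_le P approx] F show ?thesis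
    unfolding E_def[abs_def] P_def[abs_def] W_def by (intro conjI) auto
qed

lemma exists_pert_scale:
  fixes a :: "nat \<Rightarrow> complex^'m \<Rightarrow> real"
  assumes p: "p \<ge> 2"
    and a_poly: "\<And>j. j \<in> {2..p} \<Longrightarrow> poly_fun_deg (5 * j) (a j)"
    and a_zero: "\<And>j. j \<in> {2..p} \<Longrightarrow> a j 0 = 0"
    and a_deriv: "\<And>j. j \<in> {2..p} \<Longrightarrow> (a j has_derivative (\<lambda>_. 0)) (at 0)"
  shows "\<exists>\<tau>>0. \<forall>u. 1 + (\<Sum>j=2..p. \<bar>a j u\<bar> * \<tau> ^ j) \<le> exp ((norm u)\<^sup>2 / 2)"
proof -
  define K where "K = 5 * p"
  have "\<exists>c\<ge>0. \<forall>u. \<bar>a j u\<bar> \<le> c * ((norm u)\<^sup>2 + norm u ^ (2 * K))" if j: "j \<in> {2..p}" for j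
    using j p by (intro poly_fun_deg_vanishing_order2_bound[OF a_poly a_zero a_deriv]) (auto simp: K_def)
  then obtain c where c: "\<And>j. j \<in> {2..p} \<Longrightarrow> c j \<ge> 0"
    and a_le: "\<And>j u. j \<in> {2..p} \<Longrightarrow> \<bar>a j u\<bar> \<le> c j * ((norm u)\<^sup>2 + norm u ^ (2 * K))"
    by metis
  have "(\<Sum>j=2..p. c j) \<ge> 0" "K \<ge> 1" using c p by (auto simp: K_def intro: sum_nonneg)
  then obtain \<tau> where \<tau>: "0 < \<tau>" "\<tau> \<le> 1"
    and \<tau>_le: "\<And>\<rho>. 1 + \<tau>\<^sup>2 * ((\<Sum>j=2..p. c j) * (\<rho>\<^sup>2 + \<bar>\<rho>\<bar> ^ (2 * K))) \<le> exp (\<rho>\<^sup>2 / 2)"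
    using exists_scale_le_exp by blast
  have "1 + (\<Sum>j=2..p. \<bar>a j u\<bar> * \<tau> ^ j) \<le> exp ((norm u)\<^sup>2 / 2)" for u
  proof -
    have "(\<Sum>j=2..p. \<bar>a j u\<bar> * \<tau> ^ j) \<le> (\<Sum>j=2..p. \<tau>\<^sup>2 * (c j * ((norm u)\<^sup>2 + norm u ^ (2 * K))))"
    proof (rule sum_mono)
      fix j assume j: "j \<in> {2..p}"
      have "\<bar>a j u\<bar> * \<tau> ^ j \<le> \<bar>a j u\<bar> * \<tau>\<^sup>2" using \<tau> j by (intro mult_left_mono power_decreasing) auto
      also have "\<dots> \<le> \<tau>\<^sup>2 * (c j * ((norm u)\<^sup>2 + norm u ^ (2 * K)))"
        using mult_left_mono[OF a_le[OF j], of "\<tau>\<^sup>2"] by (simp add: mult.commute)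
      finally show "\<bar>a j u\<bar> * \<tau> ^ j \<le> \<tau>\<^sup>2 * (c j * ((norm u)\<^sup>2 + norm u ^ (2 * K)))" .
    qed
    then show ?thesis using \<tau>_le[of "norm u"] by (simp add: sum_distrib_left sum_distrib_right)
  qed
  then show ?thesis using \<tau> by blast
qed

lemma powr_neg_half_as_power:
  fixes k \<tau> :: real
  assumes \<tau>: "\<tau> > 0" and k: "k \<ge> 1 / \<tau>\<^sup>2" "k \<ge> 1"
  obtains t where "0 \<le> t" "t \<le> \<tau>" "\<And>j. k powr (- real j / 2) = t ^ j"
    and "(t / \<tau>) ^ (p + 1) \<le> k powr (- real p / 2 - 1 / 4) / \<tau> ^ (p + 1)"
proof
  define t where "t = k powr (- 1 / 2)"
  show t_power: "k powr (- real j / 2) = t ^ j" for j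
    using k by (simp add: t_def powr_realpow[symmetric] powr_powr)
  have "1 / \<tau> \<le> sqrt k"
    using real_sqrt_le_mono[OF k(1)] \<tau> by (simp add: real_sqrt_divide)
  then have "inverse (sqrt k) \<le> inverse (1 / \<tau>)"
    using \<tau> by (intro le_imp_inverse_le) auto
  moreover have "t = inverse (sqrt k)"
    using k by (simp add: t_def powr_minus powr_half_sqrt)
  ultimately show "0 \<le> t" "t \<le> \<tau>" using k by simp_all
  have "t ^ (p + 1) \<le> k powr (- real p / 2 - 1 / 4)"
    unfolding t_power[symmetric] using k by (intro powr_mono) auto
  then show "(t / \<tau>) ^ (p + 1) \<le> k powr (- real p / 2 - 1 / 4) / \<tau> ^ (p + 1)"
    using \<tau> by (simp add: power_divide divide_right_mono)
qed

theorem lemma4p2: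
  fixes F :: "complex^'m \<Rightarrow> real"
    and a :: "nat \<Rightarrow> complex^'m \<Rightarrow> real"
    and p :: nat
  assumes F_cont: "continuous_on UNIV F"
    and F_growth: "\<exists>C r. \<forall>u. \<bar>F u\<bar> \<le> C * (1 + norm u ^ r)"
    and p_ge: "p \<ge> 2"
    and a_poly: "\<And>j. j \<in> {2..p} \<Longrightarrow> poly_fun_deg (5 * j) (a j)"
    and a_parity: "\<And>j u. j \<in> {2..p} \<Longrightarrow> a j (- u) = (-1) ^ j * a j u"
    and a_zero: "\<And>j. j \<in> {2..p} \<Longrightarrow> a j 0 = 0"
    and a_deriv: "\<And>j. j \<in> {2..p} \<Longrightarrow> (a j has_derivative (\<lambda>_. 0)) (at 0)"
  shows "\<exists>K::nat. \<exists>C::real. \<forall>k\<ge>K.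
     (\<forall>u. \<bar>exp (- (norm u)\<^sup>2) * (1 + (\<Sum>j=2..p. a j u * real k powr (- real j / 2)))\<bar> \<le> 1)
   \<and> integrable lborel
       (\<lambda>u. Gfun (exp (- (norm u)\<^sup>2) * (1 + (\<Sum>j=2..p. a j u * real k powr (- real j / 2)))) * F u)
   \<and> (\<forall>n\<ge>1. integrable lborel
       (\<lambda>u. exp (- real n * (norm u)\<^sup>2) *
            (1 + (\<Sum>j=2..p. Bpj p j (\<lambda>l. a l u) n * real k powr (- real j / 2))) * F u))
   \<and> summable (\<lambda>n. (1 / (real (Suc n))\<^sup>2) *
       (\<integral>u. exp (- real (Suc n) * (norm u)\<^sup>2) *
            (1 + (\<Sum>j=2..p. Bpj p j (\<lambda>l. a l u) (Suc n) * real k powr (- real j / 2))) * F u \<partial>lborel))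
   \<and> \<bar>(\<integral>u. Gfun (exp (- (norm u)\<^sup>2) * (1 + (\<Sum>j=2..p. a j u * real k powr (- real j / 2)))) * F u \<partial>lborel)
      - (1 / (4 * pi\<^sup>2)) * (\<Sum>n. (1 / (real (Suc n))\<^sup>2) *
          (\<integral>u. exp (- real (Suc n) * (norm u)\<^sup>2) *
            (1 + (\<Sum>j=2..p. Bpj p j (\<lambda>l. a l u) (Suc n) * real k powr (- real j / 2))) * F u \<partial>lborel))\<bar>
     \<le> C * real k powr (- real p / 2 - 1 / 4)"
proof -
  obtain CF r where CF: "\<And>u. \<bar>F u\<bar> \<le> CF * (1 + norm u ^ r)" using F_growth by blast
  have F: "F \<in> borel_measurable borel" using F_cont by (rule borel_measurable_continuous_onI)
  have a: "a j \<in> borel_measurable borel" if "j \<in> {2..p}" for j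
    using a_poly[OF that] by (rule poly_fun_deg_measurable)
  have W: "integrable lborel (\<lambda>u. exp (- (norm u)\<^sup>2 / 2) * \<bar>F u\<bar>)"
    using F CF by (rule integrable_gaussian_weight)
  obtain \<tau> where \<tau>: "\<tau> > 0" and S: "\<And>u. 1 + (\<Sum>j=2..p. \<bar>a j u\<bar> * \<tau> ^ j) \<le> exp ((norm u)\<^sup>2 / 2)"
    using exists_pert_scale[OF p_ge a_poly a_zero a_deriv] by blast
  define D where "D = 1 / (4 * pi\<^sup>2) * (\<Sum>n. 1 / (real (Suc n))\<^sup>2)
    * (\<integral>u. exp (- (norm u)\<^sup>2 / 2) * \<bar>F u\<bar> \<partial>lborel)"
  have "0 \<le> (\<Sum>n. 1 / (real (Suc n))\<^sup>2)" by (rule suminf_nonneg[OF summable_inverse_Suc_square]) simp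
  moreover have "0 \<le> (\<integral>u. exp (- (norm u)\<^sup>2 / 2) * \<bar>F u\<bar> \<partial>lborel)" by (rule integral_nonneg_AE) simp
  ultimately have D: "D \<ge> 0" by (simp add: D_def)
  show ?thesis
  proof (intro exI[of _ "nat \<lceil>1 / \<tau>\<^sup>2\<rceil> + 1"] exI[of _ "D / \<tau> ^ (p + 1)"] allI impI, goal_cases)
    case (1 k)
    then have "real k \<ge> 1 / \<tau>\<^sup>2" "real k \<ge> 1" by linarith+
    then obtain t where t: "0 \<le> t" "t \<le> \<tau>" and k_powr: "\<And>j. real k powr (- real j / 2) = t ^ j"
      and decay: "(t / \<tau>) ^ (p + 1) \<le> real k powr (- real p / 2 - 1 / 4) / \<tau> ^ (p + 1)"
      using powr_neg_half_as_power[OF \<tau>] by blast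
    have "D * (t / \<tau>) ^ (p + 1) \<le> D / \<tau> ^ (p + 1) * real k powr (- real p / 2 - 1 / 4)"
      using mult_left_mono[OF decay D] by simp
    with Gfun_gaussian_pert_estimate[OF F a W p_ge t S] show ?case
      unfolding k_powr D_def by (meson order.trans)
  qed
qed

end
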